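(* Let $\mathcal{X}$ and $\mathcal{Y}$ be mm-spaces with $X$ and $Y$ finite sets, and let $p\geq1$. If $|X|=|Y|$ then $d_{\mathrm{GM},p}(\mathcal{X},\mathcal{Y})=d_{\mathrm{GM},p}(\mathcal{Y},\mathcal{X})$. If $|X|\neq|Y|$, then at least one of $d_{\mathrm{GM},p}(\mathcal{X},\mathcal{Y})$, $d_{\mathrm{GM},p}(\mathcal{Y},\mathcal{X})$ equals $\infty$, so that $d_{\mathrm{GM},p}(\mathcal{X},\mathcal{Y})=d_{\mathrm{GM},p}(\mathcal{Y},\mathcal{X})$ holds only when both equal $\infty$.
   Context: A metric measure space (mm-space) is a triple $\mathcal{X}=(X,d_X,\mu_X)$ where $(X,d_X)$ is a compact metric space and $\mu_X$ is a Borel probability measure on $X$ with full support. For mm-spaces $\mathcal{X},\mathcal{Y}$, let $\mathcal{T}(\mu_X,\mu_Y)$ be the set of measurable maps $\phi:X\to Y$ with $\phi_\#\mu_X=\mu_Y$. For $p\in[1,\infty)$, $$d_{\mathrm{GM},p}(\mathcal{X},\mathcal{Y})=\inf_{\phi\in\mathcal{T}(\mu_X,\mu_Y)}\left(\iint_{X\times X}\big|d_X(x,x')-d_Y(\phi(x),\phi(x'))\big|^p\,\mu_X(dx)\,\mu_X(dx')\right)^{1/p},$$ with $d_{\mathrm{GM},p}(\mathcal{X},\mathcal{Y})=\infty$ if $\mathcal{T}(\mu_X,\mu_Y)=\emptyset$. *)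

theory Defs
  imports "HOL-Analysis.Analysis" "HOL-Library.Extended_Real"
begin

text \<open>On a finite metric space every Borel probability measure is given by its
point masses, and every map is measurable.\<close>

definition is_metric_on :: "'a set \<Rightarrow> ('a \<Rightarrow> 'a \<Rightarrow> real) \<Rightarrow> bool" where
  "is_metric_on X d \<longleftrightarrow>
     (\<forall>x\<in>X. \<forall>y\<in>X. d x y \<ge> 0 \<and> (d x y = 0 \<longleftrightarrow> x = y) \<and> d x y = d y x) \<and>
     (\<forall>x\<in>X. \<forall>y\<in>X. \<forall>z\<in>X. d x z \<le> d x y + d y z)"

definition finite_mm_space :: "'a set \<Rightarrow> ('a \<Rightarrow> 'a \<Rightarrow> real) \<Rightarrow> ('a \<Rightarrow> real) \<Rightarrow> bool" where
  "finite_mm_space X d \<mu> \<longleftrightarrow> finite X \<and> X \<noteq> {} \<and> is_metric_on X d \<and>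
     (\<forall>x\<in>X. \<mu> x > 0) \<and> (\<Sum>x\<in>X. \<mu> x) = 1"

definition transport_maps ::
  "'a set \<Rightarrow> ('a \<Rightarrow> real) \<Rightarrow> 'b set \<Rightarrow> ('b \<Rightarrow> real) \<Rightarrow> ('a \<Rightarrow> 'b) set" where
  "transport_maps X \<mu>X Y \<mu>Y =
     {\<phi>. (\<forall>x\<in>X. \<phi> x \<in> Y) \<and> (\<forall>y\<in>Y. (\<Sum>x\<in>{x\<in>X. \<phi> x = y}. \<mu>X x) = \<mu>Y y)}"

definition gm_cost ::
  "real \<Rightarrow> 'a set \<Rightarrow> ('a \<Rightarrow> 'a \<Rightarrow> real) \<Rightarrow> ('a \<Rightarrow> real) \<Rightarrow> ('b \<Rightarrow> 'b \<Rightarrow> real) \<Rightarrow> ('a \<Rightarrow> 'b) \<Rightarrow> real" where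
  "gm_cost p X dX \<mu>X dY \<phi> =
     (\<Sum>x\<in>X. \<Sum>x'\<in>X. \<bar>dX x x' - dY (\<phi> x) (\<phi> x')\<bar> powr p * \<mu>X x * \<mu>X x') powr (1 / p)"

definition d_GM ::
  "real \<Rightarrow> 'a set \<Rightarrow> ('a \<Rightarrow> 'a \<Rightarrow> real) \<Rightarrow> ('a \<Rightarrow> real) \<Rightarrow>
   'b set \<Rightarrow> ('b \<Rightarrow> 'b \<Rightarrow> real) \<Rightarrow> ('b \<Rightarrow> real) \<Rightarrow> ereal" where
  "d_GM p X dX \<mu>X Y dY \<mu>Y =
     (if transport_maps X \<mu>X Y \<mu>Y = {} then \<infinity>
      else (INF \<phi>\<in>transport_maps X \<mu>X Y \<mu>Y. ereal (gm_cost p X dX \<mu>X dY \<phi>)))"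

end

theory Submission
  imports Defs
begin

text \<open>Since every point of Y carries positive mass, a measure-preserving map
\<open>\<phi> : X \<rightarrow> Y\<close> is onto, so \<open>|Y| \<le> |X|\<close>; hence if \<open>|X| \<noteq> |Y|\<close> there are no
measure-preserving maps in one of the two directions and that distance is
\<open>\<infinity>\<close>. If \<open>|X| = |Y|\<close>, a surjection between finite sets of equal size is a
bijection, so \<open>\<phi>\<close> matches the point masses one-to-one; its inverse is then
measure-preserving in the opposite direction and has the same distortion
cost. Thus the two infima range over the same set of costs; neither the
metric axioms nor \<open>p \<ge> 1\<close> play a role.\<close>

lemma transport_map_image:
  assumes "\<forall>y\<in>Y. \<mu>Y y > 0" and "\<phi> \<in> transport_maps X \<mu>X Y \<mu>Y"
  shows "\<phi> ` X = Y"
proof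
  show "\<phi> ` X \<subseteq> Y" using assms(2) unfolding transport_maps_def by auto
  show "Y \<subseteq> \<phi> ` X"
  proof
    fix y assume "y \<in> Y"
    with assms have "(\<Sum>x\<in>{x\<in>X. \<phi> x = y}. \<mu>X x) \<noteq> 0"
      unfolding transport_maps_def by force
    then have "{x\<in>X. \<phi> x = y} \<noteq> {}" by force
    then show "y \<in> \<phi> ` X" by auto
  qed
qed

lemma transport_maps_empty_if_card_less:
  assumes "finite X" and "\<forall>y\<in>Y. \<mu>Y y > 0" and "card X < card Y"
  shows "transport_maps X \<mu>X Y \<mu>Y = {}"
  using transport_map_image[OF assms(2)] card_image_le[OF assms(1)] assms(3)
  by (metis equals0I leD)

lemma d_GM_infinite_if_card_less:
  assumes "finite X" and "\<forall>y\<in>Y. \<mu>Y y > 0" and "card X < card Y"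
  shows "d_GM p X dX \<mu>X Y dY \<mu>Y = \<infinity>"
  using transport_maps_empty_if_card_less[OF assms] by (simp add: d_GM_def)

lemma transport_map_bij_betw:
  assumes "finite X" and "card X = card Y" and "\<forall>y\<in>Y. \<mu>Y y > 0"
    and "\<phi> \<in> transport_maps X \<mu>X Y \<mu>Y"
  shows "bij_betw \<phi> X Y"
  using transport_map_image[OF assms(3,4)] assms(1,2)
  by (simp add: bij_betw_def eq_card_imp_inj_on)

lemma bij_transport_map_mass:
  assumes "bij_betw \<phi> X Y" and "\<phi> \<in> transport_maps X \<mu>X Y \<mu>Y" and "x \<in> X"
  shows "\<mu>Y (\<phi> x) = \<mu>X x"
proof -
  have "{x'\<in>X. \<phi> x' = \<phi> x} = {x}"
    using assms(1,3) by (auto simp: bij_betw_def dest: inj_onD)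
  moreover have "\<phi> x \<in> Y" using assms(1,3) bij_betwE by blast
  ultimately show ?thesis using assms(2) unfolding transport_maps_def by force
qed

lemma inv_into_transport_map:
  assumes "bij_betw \<phi> X Y" and "\<forall>x\<in>X. \<mu>Y (\<phi> x) = \<mu>X x"
  shows "inv_into X \<phi> \<in> transport_maps Y \<mu>Y X \<mu>X"
  unfolding transport_maps_def
proof (intro CollectI conjI ballI)
  fix y assume "y \<in> Y"
  then show "inv_into X \<phi> y \<in> X" using assms(1) bij_betwE bij_betw_inv_into by blast
next
  fix x assume x: "x \<in> X"
  have "{y\<in>Y. inv_into X \<phi> y = x} = {\<phi> x}"
    using assms(1) x by (auto simp: bij_betw_def f_inv_into_f)
  then show "(\<Sum>y\<in>{y\<in>Y. inv_into X \<phi> y = x}. \<mu>Y y) = \<mu>X x"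
    using assms(2) x by simp
qed

lemma gm_cost_inv_into:
  assumes "bij_betw \<phi> X Y" and "\<forall>x\<in>X. \<mu>Y (\<phi> x) = \<mu>X x"
  shows "gm_cost p Y dY \<mu>Y dX (inv_into X \<phi>) = gm_cost p X dX \<mu>X dY \<phi>"
proof -
  have inv: "inv_into X \<phi> (\<phi> x) = x" if "x \<in> X" for x
    using assms(1) that by (simp add: bij_betw_def)
  have "(\<Sum>y\<in>Y. \<Sum>y'\<in>Y. \<bar>dY y y' - dX (inv_into X \<phi> y) (inv_into X \<phi> y')\<bar> powr p * \<mu>Y y * \<mu>Y y')
      = (\<Sum>x\<in>X. \<Sum>x'\<in>X. \<bar>dY (\<phi> x) (\<phi> x') - dX (inv_into X \<phi> (\<phi> x)) (inv_into X \<phi> (\<phi> x'))\<bar> powr p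
            * \<mu>Y (\<phi> x) * \<mu>Y (\<phi> x'))"
    by (simp add: sum.reindex_bij_betw[OF assms(1), symmetric])
  also have "\<dots> = (\<Sum>x\<in>X. \<Sum>x'\<in>X. \<bar>dX x x' - dY (\<phi> x) (\<phi> x')\<bar> powr p * \<mu>X x * \<mu>X x')"
    using assms(2) by (intro sum.cong refl) (simp add: inv abs_minus_commute)
  finally show ?thesis unfolding gm_cost_def by simp
qed

lemma d_GM_swap_le_if_card_eq:
  assumes "finite X" and "card X = card Y" and "\<forall>y\<in>Y. \<mu>Y y > 0"
  shows "d_GM p Y dY \<mu>Y X dX \<mu>X \<le> d_GM p X dX \<mu>X Y dY \<mu>Y"
proof -
  have swap: "\<exists>\<psi>\<in>transport_maps Y \<mu>Y X \<mu>X.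
      ereal (gm_cost p Y dY \<mu>Y dX \<psi>) \<le> ereal (gm_cost p X dX \<mu>X dY \<phi>)"
    if \<phi>: "\<phi> \<in> transport_maps X \<mu>X Y \<mu>Y" for \<phi>
  proof -
    have bij: "bij_betw \<phi> X Y" using transport_map_bij_betw[OF assms \<phi>] .
    have "\<forall>x\<in>X. \<mu>Y (\<phi> x) = \<mu>X x" using bij_transport_map_mass[OF bij \<phi>] by blast
    with bij show ?thesis
      using inv_into_transport_map gm_cost_inv_into by (metis order_refl)
  qed
  show ?thesis
  proof (cases "transport_maps X \<mu>X Y \<mu>Y = {}")
    case False
    with swap have "transport_maps Y \<mu>Y X \<mu>X \<noteq> {}" by blast
    with False show ?thesis using swap by (simp add: d_GM_def INF_mono)
  qed (simp add: d_GM_def)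
qed

theorem proposition2p3:
  fixes X :: "'a set" and dX :: "'a \<Rightarrow> 'a \<Rightarrow> real" and \<mu>X :: "'a \<Rightarrow> real"
    and Y :: "'b set" and dY :: "'b \<Rightarrow> 'b \<Rightarrow> real" and \<mu>Y :: "'b \<Rightarrow> real"
    and p :: real
  assumes "finite_mm_space X dX \<mu>X" and "finite_mm_space Y dY \<mu>Y" and "p \<ge> 1"
  shows "(card X = card Y \<longrightarrow> d_GM p X dX \<mu>X Y dY \<mu>Y = d_GM p Y dY \<mu>Y X dX \<mu>X)
       \<and> (card X \<noteq> card Y \<longrightarrow>
            (d_GM p X dX \<mu>X Y dY \<mu>Y = \<infinity> \<or> d_GM p Y dY \<mu>Y X dX \<mu>X = \<infinity>) \<and>
            (d_GM p X dX \<mu>X Y dY \<mu>Y = d_GM p Y dY \<mu>Y X dX \<mu>X \<longleftrightarrow>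
               d_GM p X dX \<mu>X Y dY \<mu>Y = \<infinity> \<and> d_GM p Y dY \<mu>Y X dX \<mu>X = \<infinity>))"
proof -
  have X: "finite X" "\<forall>x\<in>X. \<mu>X x > 0" and Y: "finite Y" "\<forall>y\<in>Y. \<mu>Y y > 0"
    using assms(1,2) unfolding finite_mm_space_def by auto
  have "d_GM p X dX \<mu>X Y dY \<mu>Y = d_GM p Y dY \<mu>Y X dX \<mu>X" if "card X = card Y"
    using X Y that by (intro antisym d_GM_swap_le_if_card_eq) auto
  moreover have "d_GM p X dX \<mu>X Y dY \<mu>Y = \<infinity> \<or> d_GM p Y dY \<mu>Y X dX \<mu>X = \<infinity>"
    if "card X \<noteq> card Y"
    using that d_GM_infinite_if_card_less[OF X(1) Y(2)] d_GM_infinite_if_card_less[OF Y(1) X(2)]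
    by (meson linorder_neqE_nat)
  ultimately show ?thesis by auto
qed

end
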